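(* Let $E=\frac{\sqrt{15}}{4}\begin{pmatrix}1&0\\0&0\end{pmatrix}$ and $B=\frac18\begin{pmatrix}1&1\\1&1\end{pmatrix}$, with Bloch representations $e^0=\sqrt{15}/4$, $\vec e=(0,0,\sqrt{15}/4)$, $b^0=1/4$, $\vec b=\tfrac14(1,0,0)$. Then $\|\vec e\|^2+\|\vec b\|^2-(\vec e\cdot\vec b)^2=1$, yet the two-outcome POVMs $(E,\mathbb 1-E)$ and $(B,\mathbb 1-B)$ are not jointly measurable.
   Context: A qubit effect $E$ is written $E=\tfrac12(e^0\mathbb 1+\vec e\cdot\vec\sigma)$ with $\vec\sigma$ the vector of Pauli matrices. Two POVMs $(E_i)$, $(B_j)$ are jointly measurable if there is a POVM $(N_{ij})$ with $\sum_jN_{ij}=E_i$, $\sum_iN_{ij}=B_j$. *)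

theory Defs
  imports "HOL-Analysis.Analysis"
begin

type_synonym qmat = "complex^2^2"

definition mat2 :: "complex \<Rightarrow> complex \<Rightarrow> complex \<Rightarrow> complex \<Rightarrow> qmat" where
  "mat2 a b c d = vector [vector [a, b], vector [c, d]]"

definition pauli_x :: qmat where "pauli_x = mat2 0 1 1 0"
definition pauli_y :: qmat where "pauli_y = mat2 0 (- \<i>) \<i> 0"
definition pauli_z :: qmat where "pauli_z = mat2 1 0 0 (-1)"

definition cscale :: "complex \<Rightarrow> qmat \<Rightarrow> qmat" where
  "cscale c A = (\<chi> i j. c * A$i$j)"

definition bloch :: "real \<Rightarrow> real^3 \<Rightarrow> qmat" where
  "bloch e0 e = cscale (complex_of_real (1/2))
     (cscale (complex_of_real e0) (mat 1) + cscale (complex_of_real (e$1)) pauli_x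
      + cscale (complex_of_real (e$2)) pauli_y + cscale (complex_of_real (e$3)) pauli_z)"

definition psd :: "qmat \<Rightarrow> bool" where
  "psd A \<longleftrightarrow> (\<forall>v::complex^2. let q = (\<Sum>i\<in>UNIV. cnj (v$i) * (A *v v)$i) in
                  q \<in> \<real> \<and> 0 \<le> Re q)"

definition povm :: "('i::finite \<Rightarrow> qmat) \<Rightarrow> bool" where
  "povm E \<longleftrightarrow> (\<forall>i. psd (E i)) \<and> (\<Sum>i\<in>UNIV. E i) = mat 1"

definition jointly_measurable ::
    "('i::finite \<Rightarrow> qmat) \<Rightarrow> ('j::finite \<Rightarrow> qmat) \<Rightarrow> bool" where
  "jointly_measurable E B \<longleftrightarrow>
     (\<exists>N :: 'i \<Rightarrow> 'j \<Rightarrow> qmat. povm (\<lambda>(i,j). N i j) \<and>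
        (\<forall>i. (\<Sum>j\<in>UNIV. N i j) = E i) \<and> (\<forall>j. (\<Sum>i\<in>UNIV. N i j) = B j))"

definition binary_povm :: "qmat \<Rightarrow> bool \<Rightarrow> qmat" where
  "binary_povm X = (\<lambda>b. if b then X else mat 1 - X)"

end

theory Submission
  imports Defs
begin

text \<open>
  If (E, 1 - E) and (B, 1 - B) had a joint POVM with N(True,True) = A, then the other three
  entries would be E - A, B - A and 1 - E - B + A, all positive semidefinite. For
  E = a |0><0| and B = 2 b |+><+| with a + b > 1, testing these four matrices against suitable
  real vectors gives A22 <= 0, A11 >= a + b - 1 > 0, Re (A12 + A21) >= A11 + A22 (as |+> is
  orthogonal to (1, -1)) and A11 - 2 Re (A12 + A21) + 4 A22 >= 0; together these force
  A11 <= 2 A22 <= 0. The given E (a = sqrt 15 / 4 > 7/8) and B (b = 1/8) are of this form,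
  although their Bloch vectors attain equality in the quadratic condition.
\<close>

lemma mat2_nth [simp]:
  "mat2 a b c d $1$1 = a" "mat2 a b c d $1$2 = b" "mat2 a b c d $2$1 = c" "mat2 a b c d $2$2 = d"
  by (simp_all add: mat2_def)

lemma qmat_eqI:
  "(M::qmat)$1$1 = N$1$1 \<Longrightarrow> M$1$2 = N$1$2 \<Longrightarrow> M$2$1 = N$2$1 \<Longrightarrow> M$2$2 = N$2$2 \<Longrightarrow> M = N"
  by (simp add: vec_eq_iff forall_2)

lemma mat2_arith [simp]:
  "cscale k (mat2 a b c d) = mat2 (k*a) (k*b) (k*c) (k*d)"
  "mat2 a b c d + mat2 a' b' c' d' = mat2 (a+a') (b+b') (c+c') (d+d')"
  "mat2 a b c d - mat2 a' b' c' d' = mat2 (a-a') (b-b') (c-c') (d-d')"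
  by (rule qmat_eqI; simp add: cscale_def)+

lemma mat_1_eq_mat2: "(mat 1 :: qmat) = mat2 1 0 0 1"
  by (rule qmat_eqI; simp add: mat_def)

lemma binary_quadratic_form_nonneg:
  fixes \<alpha> \<beta> \<gamma> x y :: real
  assumes "\<alpha> \<ge> 0" "\<beta>^2 \<le> \<alpha>*\<gamma>" "\<gamma> \<ge> 0"
  shows "0 \<le> \<alpha>*x^2 + 2*\<beta>*x*y + \<gamma>*y^2"
proof (cases "\<alpha> = 0")
  case True
  then show ?thesis using assms by simp
next
  case False
  then have "\<alpha> > 0" using assms(1) by simp
  have "\<alpha>*(\<alpha>*x^2 + 2*\<beta>*x*y + \<gamma>*y^2) = (\<alpha>*x + \<beta>*y)^2 + (\<alpha>*\<gamma> - \<beta>^2)*y^2"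
    by (simp add: algebra_simps power2_eq_square)
  also have "\<dots> \<ge> 0" using assms(2) by simp
  finally show ?thesis using \<open>\<alpha> > 0\<close> by (simp add: zero_le_mult_iff)
qed

lemma psd_real_symmetric_mat2:
  fixes \<alpha> \<beta> \<gamma> :: real
  assumes "\<alpha> \<ge> 0" "\<beta>^2 \<le> \<alpha>*\<gamma>" "\<gamma> \<ge> 0"
  shows "psd (mat2 \<alpha> \<beta> \<beta> \<gamma>)"
  unfolding psd_def Let_def
proof
  fix v :: "complex^2"
  obtain x1 y1 x2 y2 where v: "v$1 = Complex x1 y1" "v$2 = Complex x2 y2"
    by (metis complex.exhaust)
  have "(\<Sum>i\<in>UNIV. cnj (v$i) * (mat2 \<alpha> \<beta> \<beta> \<gamma> *v v)$i)
     = of_real ((\<alpha>*x1^2 + 2*\<beta>*x1*x2 + \<gamma>*x2^2) + (\<alpha>*y1^2 + 2*\<beta>*y1*y2 + \<gamma>*y2^2))"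
    by (simp add: sum_2 matrix_vector_mult_def v complex_eq_iff power2_eq_square algebra_simps)
  then show "(\<Sum>i\<in>UNIV. cnj (v$i) * (mat2 \<alpha> \<beta> \<beta> \<gamma> *v v)$i) \<in> \<real> \<and>
      0 \<le> Re (\<Sum>i\<in>UNIV. cnj (v$i) * (mat2 \<alpha> \<beta> \<beta> \<gamma> *v v)$i)"
    using binary_quadratic_form_nonneg[OF assms, of x1 x2]
      binary_quadratic_form_nonneg[OF assms, of y1 y2] by simp
qed

lemma psd_real_quadratic_form_nonneg:
  fixes x y :: real
  assumes "psd M"
  shows "0 \<le> x^2 * Re (M$1$1) + x*y * Re (M$1$2 + M$2$1) + y^2 * Re (M$2$2)"
proof -
  have "0 \<le> Re (\<Sum>i\<in>UNIV. cnj ((vector [of_real x, of_real y]::complex^2)$i)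
                  * (M *v vector [of_real x, of_real y])$i)"
    using assms unfolding psd_def Let_def by blast
  then show ?thesis
    by (simp add: sum_2 matrix_vector_mult_def power2_eq_square algebra_simps)
qed

lemma povm_binary_povm:
  assumes "psd X" "psd (mat 1 - X)"
  shows "povm (binary_povm X)"
  using assms unfolding povm_def binary_povm_def by (simp add: UNIV_bool)

lemma povm_binary_povm_real_symmetric_mat2:
  fixes \<alpha> \<beta> \<gamma> :: real
  assumes "0 \<le> \<alpha>" "\<beta>^2 \<le> \<alpha>*\<gamma>" "0 \<le> \<gamma>"
      and "\<alpha> \<le> 1" "\<beta>^2 \<le> (1 - \<alpha>)*(1 - \<gamma>)" "\<gamma> \<le> 1"
  shows "povm (binary_povm (mat2 \<alpha> \<beta> \<beta> \<gamma>))"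
proof (rule povm_binary_povm)
  show "psd (mat2 \<alpha> \<beta> \<beta> \<gamma>)"
    using assms by (intro psd_real_symmetric_mat2)
  have "psd (mat2 (1 - \<alpha>) (- \<beta>) (- \<beta>) (1 - \<gamma>))"
    using assms by (intro psd_real_symmetric_mat2) simp_all
  then show "psd (mat 1 - mat2 \<alpha> \<beta> \<beta> \<gamma>)"
    by (simp add: mat_1_eq_mat2)
qed

lemma jointly_measurable_binary_povmE:
  assumes "jointly_measurable (binary_povm E) (binary_povm B)"
  obtains A where "psd A" "psd (E - A)" "psd (B - A)" "psd (mat 1 - E - (B - A))"
proof -
  obtain N :: "bool \<Rightarrow> bool \<Rightarrow> qmat" where
    N: "povm (\<lambda>(i, j). N i j)" and
    rows: "\<And>i. (\<Sum>j\<in>UNIV. N i j) = binary_povm E i" and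
    cols: "\<And>j. (\<Sum>i\<in>UNIV. N i j) = binary_povm B j"
    using assms unfolding jointly_measurable_def by blast
  have psd_N: "psd (N i j)" for i j
    using N unfolding povm_def by (metis case_prod_conv)
  have "N True False + N True True = E" "N False False + N False True = mat 1 - E"
    "N False True + N True True = B"
    using rows[of True] rows[of False] cols[of True] by (simp_all add: UNIV_bool binary_povm_def)
  then have "N True False = E - N True True" "N False True = B - N True True"
    "N False False = mat 1 - E - (B - N True True)"
    by (metis add_diff_cancel)+
  then show thesis using that psd_N by metis
qed

lemma not_jointly_measurable_projector_pair:
  fixes a \<beta> :: real
  assumes "a + \<beta> > 1"
  shows "\<not> jointly_measurable (binary_povm (mat2 a 0 0 0)) (binary_povm (mat2 \<beta> \<beta> \<beta> \<beta>))"
proof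
  assume "jointly_measurable (binary_povm (mat2 a 0 0 0)) (binary_povm (mat2 \<beta> \<beta> \<beta> \<beta>))"
  then obtain A where psd: "psd A" "psd (mat2 a 0 0 0 - A)" "psd (mat2 \<beta> \<beta> \<beta> \<beta> - A)"
    "psd (mat 1 - mat2 a 0 0 0 - (mat2 \<beta> \<beta> \<beta> \<beta> - A))"
    by (rule jointly_measurable_binary_povmE)
  have "0 \<le> - Re (A$2$2)"
    using psd_real_quadratic_form_nonneg[OF psd(2), of 0 1] by simp
  moreover have "a + \<beta> - 1 \<le> Re (A$1$1)"
    using psd_real_quadratic_form_nonneg[OF psd(4), of 1 0] by (simp add: mat_1_eq_mat2)
  moreover have "Re (A$1$1) + Re (A$2$2) \<le> Re (A$1$2 + A$2$1)"
    using psd_real_quadratic_form_nonneg[OF psd(3), of 1 "-1"] by simp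
  moreover have "2 * Re (A$1$2 + A$2$1) \<le> Re (A$1$1) + 4 * Re (A$2$2)"
    using psd_real_quadratic_form_nonneg[OF psd(1), of 1 "-2"] by (simp add: power2_eq_square)
  ultimately show False using assms by linarith
qed

theorem mainTheorem4:
  fixes E B :: qmat and e0 b0 :: real and e b :: "real^3"
  assumes "E = cscale (complex_of_real (sqrt 15 / 4)) (mat2 1 0 0 0)"
      and "B = cscale (complex_of_real (1/8)) (mat2 1 1 1 1)"
      and "e0 = sqrt 15 / 4" and "e = vector [0, 0, sqrt 15 / 4]"
      and "b0 = 1/4" and "b = (1/4) *\<^sub>R vector [1, 0, 0]"
  shows "E = bloch e0 e \<and> B = bloch b0 b
    \<and> norm e ^ 2 + norm b ^ 2 - (e \<bullet> b) ^ 2 = 1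
    \<and> povm (binary_povm E) \<and> povm (binary_povm B)
    \<and> \<not> jointly_measurable (binary_povm E) (binary_povm B)"
proof -
  define a where "a = sqrt 15 / 4"
  have a_sq: "a^2 = 15/16" unfolding a_def by (simp add: power_divide)
  have a_bounds: "7/8 < a" "a < 1"
    unfolding a_def using real_less_rsqrt[of "7/2" 15] real_sqrt_less_iff[of 15 16]
    by (simp_all add: power2_eq_square)
  have E: "E = mat2 a 0 0 0" and B: "B = mat2 (1/8) (1/8) (1/8) (1/8)"
    using assms(1,2) unfolding a_def by simp_all
  have "E = bloch e0 e" "B = bloch b0 b"
    unfolding E B bloch_def assms(3-6) mat_1_eq_mat2 pauli_x_def pauli_y_def pauli_z_def a_def
    by (rule qmat_eqI; simp)+
  moreover have "norm e ^ 2 + norm b ^ 2 - (e \<bullet> b) ^ 2 = 1"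
    unfolding power2_norm_eq_inner assms(4,6) a_def[symmetric]
    using a_sq by (simp add: inner_vec_def sum_3 power2_eq_square)
  moreover have "povm (binary_povm E)"
    unfolding E using povm_binary_povm_real_symmetric_mat2[of a 0 0] a_bounds by simp
  moreover have "povm (binary_povm B)"
    unfolding B using povm_binary_povm_real_symmetric_mat2[of "1/8" "1/8" "1/8"]
    by (simp add: power2_eq_square)
  moreover have "\<not> jointly_measurable (binary_povm E) (binary_povm B)"
    unfolding E B using not_jointly_measurable_projector_pair[of a "1/8"] a_bounds by simp
  ultimately show ?thesis by blast
qed

end
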